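(* Let $(X,d)$ be a metric space, $p\in X$, and define $\mu_p(x,y)=d(x,y)+\sqrt{d(x,p)d(y,p)}$ for $x,y\in X$. Let $x,y,z\in X$. If $$\max\{\mu_p(x,z),\mu_p(y,z)\}\geq K\min\{\mu_p(x,z),\mu_p(y,z)\}$$ for some $K>3$, then $$\mu_p(x,z)+\mu_p(y,z)\leq \frac{3(K+3)}{2(K-3)}\,d(x,y).$$ *)

theory Defs
  imports "HOL-Analysis.Analysis"
begin

definition mu :: "'a::metric_space \<Rightarrow> 'a \<Rightarrow> 'a \<Rightarrow> real" where
  "mu p x y = dist x y + sqrt (dist x p * dist y p)"

end

theory Submission
  imports Defs
begin

text \<open>Suppose \<open>\<mu>\<^sub>p(x,z) \<ge> K \<mu>\<^sub>p(y,z)\<close>. Moving the first argument of \<open>\<mu>\<^sub>p\<close> from \<open>y\<close> to \<open>x\<close>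
  costs at most \<open>3/2 d(x,y) + \<mu>\<^sub>p(y,z)\<close>, because \<open>d(y,p)\<close> and \<open>d(z,p)\<close> are both bounded by
  \<open>\<mu>\<^sub>p(y,z)\<close> and the geometric mean is bounded by the arithmetic one. Combined with the
  hypothesis this gives \<open>(K - 2) \<mu>\<^sub>p(y,z) \<le> 3/2 d(x,y)\<close>, and the claimed bound follows by
  linear arithmetic.\<close>

lemma min_le_sqrt_mult:
  fixes a b :: real
  assumes "a \<ge> 0" "b \<ge> 0"
  shows "min a b \<le> sqrt (a * b)"
proof -
  have "min a b * min a b \<le> a * b"
    using assms by (intro mult_mono) auto
  then have "sqrt (min a b * min a b) \<le> sqrt (a * b)"
    by (rule real_sqrt_le_mono)
  then show ?thesis
    using assms by simp
qed

lemma mu_nonneg: "mu p x y \<ge> 0"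
  unfolding mu_def by simp

lemma dist_le_mu: "dist x y \<le> mu p x y"
  unfolding mu_def by simp

lemma dist_base_le_mu: "max (dist x p) (dist y p) \<le> mu p x y"
proof -
  have "\<bar>dist x p - dist y p\<bar> \<le> dist x y"
    by (smt (verit) dist_commute dist_triangle)
  moreover have "min (dist x p) (dist y p) \<le> sqrt (dist x p * dist y p)"
    by (rule min_le_sqrt_mult) simp_all
  ultimately show ?thesis
    unfolding mu_def by linarith
qed

lemma mu_le_dist_plus_mu: "mu p x z \<le> 3 / 2 * dist x y + 2 * mu p y z"
proof -
  define m where "m = mu p y z"
  define D where "D = dist x y"
  have "m \<ge> 0" "D \<ge> 0"
    unfolding m_def D_def by (simp_all add: mu_nonneg)
  have "dist y p \<le> m" "dist z p \<le> m"
    using dist_base_le_mu[of y p z] unfolding m_def by auto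
  then have "dist x p \<le> m + D"
    using dist_triangle[of x p y] unfolding D_def by linarith
  with \<open>dist z p \<le> m\<close> \<open>m \<ge> 0\<close> \<open>D \<ge> 0\<close>
  have "sqrt (dist x p * dist z p) \<le> sqrt ((m + D) * m)"
    by (intro real_sqrt_le_mono mult_mono) auto
  also have "\<dots> \<le> m + D / 2"
    using arith_geo_mean_sqrt[of "m + D" m] \<open>m \<ge> 0\<close> \<open>D \<ge> 0\<close> by simp
  finally have "sqrt (dist x p * dist z p) \<le> m + D / 2" .
  moreover have "dist x z \<le> D + m"
    using dist_triangle[of x z y] dist_le_mu[of y z p] unfolding D_def m_def by linarith
  ultimately have "mu p x z \<le> 3 / 2 * D + 2 * m"
    unfolding mu_def[of p x z] by linarith
  then show ?thesis
    unfolding m_def D_def .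
qed

lemma sum_le_of_ratio_gap:
  fixes K M m D :: real
  assumes "K > 3" "m \<ge> 0" "D \<ge> 0" "M \<le> 3 / 2 * D + 2 * m" "K * m \<le> M"
  shows "M + m \<le> 3 * (K + 3) / (2 * (K - 3)) * D"
proof -
  have "K * m - 3 * m \<le> 3 * D"
    using assms by linarith
  then have "(K - 3) * m \<le> 3 * D"
    by (simp add: algebra_simps)
  have "2 * (K - 3) * (M + m) \<le> 2 * (K - 3) * (3 / 2 * D + 3 * m)"
    using assms by (intro mult_left_mono) simp_all
  also have "\<dots> = 3 * (K - 3) * D + 6 * ((K - 3) * m)"
    by (simp add: algebra_simps)
  also have "\<dots> \<le> 3 * (K + 3) * D"
    using \<open>(K - 3) * m \<le> 3 * D\<close> by (simp add: algebra_simps)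
  finally have "2 * (K - 3) * (M + m) \<le> 3 * (K + 3) * D" .
  then show ?thesis
    using assms(1) by (simp add: field_simps)
qed

lemma mu_sum_le_if_ratio_ge:
  assumes "K > 3" "mu p x z \<ge> K * mu p y z"
  shows "mu p x z + mu p y z \<le> 3 * (K + 3) / (2 * (K - 3)) * dist x y"
  using assms by (intro sum_le_of_ratio_gap mu_nonneg zero_le_dist mu_le_dist_plus_mu) simp_all

theorem lemma3p2:
  fixes p x y z :: "'a::metric_space" and K :: real
  assumes "K > 3"
    and "max (mu p x z) (mu p y z) \<ge> K * min (mu p x z) (mu p y z)"
  shows "mu p x z + mu p y z \<le> 3 * (K + 3) / (2 * (K - 3)) * dist x y"
proof (cases "mu p y z \<le> mu p x z")
  case True
  then show ?thesis
    using assms by (intro mu_sum_le_if_ratio_ge) simp_all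
next
  case False
  then have "mu p y z + mu p x z \<le> 3 * (K + 3) / (2 * (K - 3)) * dist y x"
    using assms by (intro mu_sum_le_if_ratio_ge) simp_all
  then show ?thesis
    by (simp add: dist_commute add.commute)
qed

end
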